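(* Let $n \ge 0$ and $p \ge 1$ be integers, let $T_2 = \begin{pmatrix} 1 & 0 \\ 1 & 1 \end{pmatrix}$ over $\mathbb{F}_2$, let $T_p$ be a $p \times p$ binary kernel matrix, and let $T_N = T_2^{\otimes n} \otimes T_p$, where $N = 2^n p$. Then the minimum-distance spectra satisfy $$S_{T_N} = \operatorname{sort}\big(S_{T_2^{\otimes n}} \otimes S_{T_p}\big) = \operatorname{sort}\big([2 \;\; 1]^{\otimes n} \otimes S_{T_p}\big),$$ that is, for every $k \in \{1,\dots,N\}$, $S_{T_N}(k)$ equals the $k$-th entry of the vector obtained by sorting the entries of the length-$N$ vector $[2\;\;1]^{\otimes n} \otimes S_{T_p}$ in non-increasing order (and likewise for $S_{T_2^{\otimes n}} \otimes S_{T_p}$).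
   Context: All matrices are over $\mathbb{F}_2$ and $\otimes$ denotes the Kronecker product (of matrices, and of row vectors regarded as $1\times m$ matrices); $A^{\otimes n}$ is the $n$-fold Kronecker power, with $A^{\otimes 0} = (1)$. A binary kernel is a $p\times p$ binary matrix that is polarizing, i.e. it is invertible over $\mathbb{F}_2$ and no column permutation of it is upper triangular. For a binary $m \times m$ matrix $T$ with rows indexed by $[m] = \{0,1,\dots,m-1\}$ and a subset $\mathcal{R} \subseteq [m]$, $T^{(\mathcal{R})}$ denotes the submatrix formed by the rows indexed by $\mathcal{R}$, and $d(A)$ denotes the minimum Hamming distance (minimum weight of a nonzero codeword) of the binary linear code spanned by the rows of $A$. The minimum-distance spectrum of $T$ is the vector $S_T = (S_T(1), \dots, S_T(m))$ with $S_T(k) = \max_{\mathcal{R}\subseteq[m],\, |\mathcal{R}| = k} d\big(T^{(\mathcal{R})}\big)$. For a real vector $v$, $\operatorname{sort}(v)$ is the vector with the same entries (with multiplicity) arranged in non-increasing order. *)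

theory Defs
  imports Main "HOL-Combinatorics.Permutations"
begin

text \<open>Binary matrices over F_2 are represented as functions nat => nat => bool
(True = 1, False = 0); an m x m matrix only uses the entries with indices < m.
Addition over F_2 is parity.\<close>

type_synonym bmat = "nat \<Rightarrow> nat \<Rightarrow> bool"

definition bmult :: "nat \<Rightarrow> bmat \<Rightarrow> bmat \<Rightarrow> bmat" where
  "bmult m A B = (\<lambda>i j. odd (card {l. l < m \<and> A i l \<and> B l j}))"

definition binvertible :: "nat \<Rightarrow> bmat \<Rightarrow> bool" where
  "binvertible m A \<longleftrightarrow> (\<exists>B. \<forall>i<m. \<forall>j<m.
      bmult m A B i j = (i = j) \<and> bmult m B A i j = (i = j))"

definition bupper_triangular :: "nat \<Rightarrow> bmat \<Rightarrow> bool" where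
  "bupper_triangular m A \<longleftrightarrow> (\<forall>i<m. \<forall>j<m. j < i \<longrightarrow> \<not> A i j)"

definition binary_kernel :: "nat \<Rightarrow> bmat \<Rightarrow> bool" where
  "binary_kernel p T \<longleftrightarrow> binvertible p T \<and>
     (\<forall>\<sigma>. \<sigma> permutes {..<p} \<longrightarrow> \<not> bupper_triangular p (\<lambda>i j. T i (\<sigma> j)))"

definition bkron :: "bmat \<Rightarrow> nat \<Rightarrow> nat \<Rightarrow> bmat \<Rightarrow> bmat" where
  "bkron A r c B = (\<lambda>i j. A (i div r) (j div c) \<and> B (i mod r) (j mod c))"

definition T2 :: bmat where
  "T2 = (\<lambda>i j. i = 1 \<or> j = 0)"

fun bkpow2 :: "bmat \<Rightarrow> nat \<Rightarrow> bmat" where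
  "bkpow2 A 0 = (\<lambda>i j. True)"
| "bkpow2 A (Suc n) = bkron A (2^n) (2^n) (bkpow2 A n)"

definition code_of_rows :: "nat \<Rightarrow> bmat \<Rightarrow> nat set \<Rightarrow> (nat \<Rightarrow> bool) set" where
  "code_of_rows m T R = {(\<lambda>j. j < m \<and> odd (card {i\<in>S. T i j})) | S. S \<subseteq> R}"

definition weight :: "nat \<Rightarrow> (nat \<Rightarrow> bool) \<Rightarrow> nat" where
  "weight m c = card {j. j < m \<and> c j}"

definition min_dist :: "nat \<Rightarrow> bmat \<Rightarrow> nat set \<Rightarrow> nat" where
  "min_dist m T R = Min {weight m c | c. c \<in> code_of_rows m T R \<and> (\<exists>j<m. c j)}"

definition md_spec :: "nat \<Rightarrow> bmat \<Rightarrow> nat \<Rightarrow> nat" where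
  "md_spec m T k = Max {min_dist m T R | R. R \<subseteq> {..<m} \<and> card R = k}"

definition md_spectrum :: "nat \<Rightarrow> bmat \<Rightarrow> nat list" where
  "md_spectrum m T = map (md_spec m T) [1..<m+1]"

definition lkron :: "nat list \<Rightarrow> nat list \<Rightarrow> nat list" where
  "lkron u v = concat (map (\<lambda>x. map (\<lambda>y. x * y) v) u)"

fun lkpow :: "nat list \<Rightarrow> nat \<Rightarrow> nat list" where
  "lkpow u 0 = [1]"
| "lkpow u (Suc n) = lkron u (lkpow u n)"

definition sort_desc :: "nat list \<Rightarrow> nat list" where
  "sort_desc xs = rev (sort xs)"

end

theory Submission
  imports Defs
begin

text \<open>
The rows of \<open>T2 \<otimes> B\<close> are \<open>(b\<^sub>i | 0)\<close> and \<open>(b\<^sub>i | b\<^sub>i)\<close>, so the code spanned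
by a row set \<open>R = R\<^sub>0 \<union> (R\<^sub>1 + M)\<close> consists of the words \<open>(u + v | v)\<close> with \<open>u\<close>
and \<open>v\<close> in the codes of \<open>B\<close> spanned by \<open>R\<^sub>0\<close> and \<open>R\<^sub>1\<close>. As for Plotkin's construction,
\<open>wt(u + v) + wt(v) \<ge> wt(u)\<close>, with \<open>wt(u + v) + wt(v) = 2 wt(v)\<close> when \<open>u = 0\<close>;
hence \<open>d(R) \<ge> d\<close> iff \<open>d(R\<^sub>0) \<ge> d\<close> and \<open>2 d(R\<^sub>1) \<ge> d\<close>. Consequently, for every
threshold \<open>d\<close>, the number of \<open>k\<close> with \<open>S(k) \<ge> d\<close> is, for \<open>T2 \<otimes> B\<close>, the number of
entries \<open>\<ge> d\<close> of \<open>S\<^sub>B\<close> plus that of \<open>2 S\<^sub>B\<close>. A non-increasing list is determined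
by these threshold counts, so \<open>S\<^bsub>T2 \<otimes> B\<^esub> = sort([2 1] \<otimes> S\<^sub>B)\<close>, and induction on
\<open>n\<close> gives the second identity. The first follows from the second applied to the
\<open>1 \<times> 1\<close> kernel \<open>(1)\<close>, which gives \<open>S\<^bsub>T2\<^sup>\<otimes>\<^sup>n\<^esub> = sort([2 1]\<^sup>\<otimes>\<^sup>n)\<close>,
since the sorted Kronecker product depends only on the multisets of entries.
\<close>

section \<open>Hamming weights and the (u | u + v) construction\<close>

lemma weight_le: "weight m c \<le> m"
  unfolding weight_def by (rule card_mono[of "{..<m}", simplified]) auto

lemma weight_cong: "(\<And>j. j < m \<Longrightarrow> c j = c' j) \<Longrightarrow> weight m c = weight m c'"
  unfolding weight_def by (rule arg_cong[where f = card]) auto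

lemma weight_xor_le: "weight m u \<le> weight m (\<lambda>j. u j \<noteq> v j) + weight m v"
proof -
  have "weight m u \<le> card ({j. j < m \<and> (u j \<noteq> v j)} \<union> {j. j < m \<and> v j})"
    unfolding weight_def by (rule card_mono) auto
  also have "\<dots> \<le> weight m (\<lambda>j. u j \<noteq> v j) + weight m v"
    unfolding weight_def by (rule card_Un_le)
  finally show ?thesis .
qed

lemma card_split_at:
  fixes M :: nat
  assumes "finite S"
  shows "card S = card {i\<in>S. i < M} + card {i. i + M \<in> S}"
proof -
  let ?high = "{i. i + M \<in> S}"
  have split: "S = {i\<in>S. i < M} \<union> (\<lambda>i. i + M) ` ?high"
  proof (intro equalityI subsetI)
    fix x assume "x \<in> S"
    show "x \<in> {i\<in>S. i < M} \<union> (\<lambda>i. i + M) ` ?high"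
    proof (cases "x < M")
      case False
      then have "x = (x - M) + M" by simp
      with \<open>x \<in> S\<close> show ?thesis by (metis (mono_tags) UnI2 image_eqI mem_Collect_eq)
    qed (use \<open>x \<in> S\<close> in simp)
  qed auto
  have "finite ?high"
    using finite_vimageI[OF assms, of "\<lambda>i. i + M"] by (simp add: vimage_def)
  then have "card S = card {i\<in>S. i < M} + card ((\<lambda>i. i + M) ` ?high)"
    using assms by (subst split, intro card_Un_disjoint) auto
  then show ?thesis by (simp add: card_image)
qed

lemma card_filter_split_at:
  fixes M :: nat
  assumes "finite S"
  shows "card {i\<in>S. P i} = card {i\<in>S. i < M \<and> P i} + card {i. i + M \<in> S \<and> P (i + M)}"
proof -
  have "card {i\<in>S. P i} = card {i\<in>{i\<in>S. P i}. i < M} + card {i. i + M \<in> {i\<in>S. P i}}"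
    by (rule card_split_at) (simp add: assms)
  also have "{i\<in>{i\<in>S. P i}. i < M} = {i\<in>S. i < M \<and> P i}" by auto
  also have "{i. i + M \<in> {i\<in>S. P i}} = {i. i + M \<in> S \<and> P (i + M)}" by auto
  finally show ?thesis .
qed

lemma weight_double: "weight (2 * M) c = weight M c + weight M (\<lambda>j. c (j + M))"
proof -
  have "weight (2 * M) c = card {j\<in>{..<2 * M}. c j}" by (simp add: weight_def)
  also have "\<dots> = card {j\<in>{..<2 * M}. j < M \<and> c j} + card {j. j + M \<in> {..<2 * M} \<and> c (j + M)}"
    by (rule card_filter_split_at) simp
  also have "{j\<in>{..<2 * M}. j < M \<and> c j} = {j. j < M \<and> c j}" by auto
  also have "{j. j + M \<in> {..<2 * M} \<and> c (j + M)} = {j. j < M \<and> c (j + M)}" by auto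
  finally show ?thesis unfolding weight_def .
qed

definition plotkin_word :: "nat \<Rightarrow> (nat \<Rightarrow> bool) \<Rightarrow> (nat \<Rightarrow> bool) \<Rightarrow> nat \<Rightarrow> bool" where
  "plotkin_word M u v = (\<lambda>j. if j < M then u j \<noteq> v j else v (j - M))"

lemma weight_plotkin_word:
  "weight (2 * M) (plotkin_word M u v) = weight M (\<lambda>j. u j \<noteq> v j) + weight M v"
proof -
  have "weight M (plotkin_word M u v) = weight M (\<lambda>j. u j \<noteq> v j)"
    and "weight M (\<lambda>j. plotkin_word M u v (j + M)) = weight M v"
    by (auto intro: weight_cong simp: plotkin_word_def)
  then show ?thesis by (simp add: weight_double)
qed

lemma plotkin_word_nonzero_iff: "(\<exists>j<2 * M. plotkin_word M u v j) \<longleftrightarrow> (\<exists>j<M. u j \<or> v j)"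
proof
  assume "\<exists>j<2 * M. plotkin_word M u v j"
  then obtain j where j: "j < 2 * M" "plotkin_word M u v j" by blast
  show "\<exists>j<M. u j \<or> v j"
  proof (cases "j < M")
    case True
    then show ?thesis using j by (auto simp: plotkin_word_def)
  next
    case False
    then have "j - M < M" "v (j - M)" using j by (simp_all add: plotkin_word_def)
    then show ?thesis by blast
  qed
next
  assume "\<exists>j<M. u j \<or> v j"
  then obtain j where j: "j < M" "u j \<or> v j" by blast
  show "\<exists>j<2 * M. plotkin_word M u v j"
  proof (cases "u j = v j")
    case True
    then have "j + M < 2 * M" "plotkin_word M u v (j + M)" using j by (simp_all add: plotkin_word_def)
    then show ?thesis by blast
  next
    case False
    then have "j < 2 * M" "plotkin_word M u v j" using j by (simp_all add: plotkin_word_def)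
    then show ?thesis by blast
  qed
qed

lemma plotkin_bound_iff:
  assumes "(\<lambda>_. False) \<in> U" "(\<lambda>_. False) \<in> V"
  shows "(\<forall>u\<in>U. \<forall>v\<in>V. (\<exists>j<M. u j \<or> v j) \<longrightarrow> d \<le> e * (weight M (\<lambda>j. u j \<noteq> v j) + weight M v))
     \<longleftrightarrow> (\<forall>u\<in>U. (\<exists>j<M. u j) \<longrightarrow> d \<le> e * weight M u)
       \<and> (\<forall>v\<in>V. (\<exists>j<M. v j) \<longrightarrow> d \<le> 2 * e * weight M v)" (is "?pairs \<longleftrightarrow> ?low \<and> ?high")
proof (intro iffI conjI)
  assume ?pairs
  have no_weight: "weight M (\<lambda>_. False) = 0" by (simp add: weight_def)
  show ?low
  proof (intro ballI impI)
    fix u assume "u \<in> U" "\<exists>j<M. u j"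
    then show "d \<le> e * weight M u"
      using \<open>?pairs\<close>[rule_format, OF _ assms(2)] by (simp add: no_weight)
  qed
  show ?high
  proof (intro ballI impI)
    fix v assume "v \<in> V" "\<exists>j<M. v j"
    then have "d \<le> e * (weight M v + weight M v)"
      using \<open>?pairs\<close>[rule_format, OF assms(1)] by simp
    then show "d \<le> 2 * e * weight M v" by (simp add: distrib_left distrib_right)
  qed
next
  assume "?low \<and> ?high"
  then have ?low and ?high by blast+
  show ?pairs
  proof (intro ballI impI)
    fix u v assume uv: "u \<in> U" "v \<in> V" "\<exists>j<M. u j \<or> v j"
    show "d \<le> e * (weight M (\<lambda>j. u j \<noteq> v j) + weight M v)"
    proof (cases "\<exists>j<M. u j")
      case True
      then have "d \<le> e * weight M u" using \<open>?low\<close> uv by blast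
      also have "\<dots> \<le> e * (weight M (\<lambda>j. u j \<noteq> v j) + weight M v)"
        using weight_xor_le by simp
      finally show ?thesis .
    next
      case False
      then have "weight M (\<lambda>j. u j \<noteq> v j) = weight M v" by (auto intro: weight_cong)
      moreover have "\<exists>j<M. v j" using uv(3) False by blast
      then have "d \<le> 2 * e * weight M v" using \<open>?high\<close> uv(2) by blast
      ultimately show ?thesis by (simp add: distrib_left distrib_right)
    qed
  qed
qed

section \<open>Codes spanned by rows of T2 \<otimes> B\<close>

definition row_sum :: "nat \<Rightarrow> bmat \<Rightarrow> nat set \<Rightarrow> nat \<Rightarrow> bool" where
  "row_sum m B S = (\<lambda>j. j < m \<and> odd (card {i\<in>S. B i j}))"

lemma code_of_rows_eq: "code_of_rows m B R = row_sum m B ` Pow R"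
  unfolding code_of_rows_def row_sum_def by auto

lemma zero_in_code_of_rows: "(\<lambda>_. False) \<in> code_of_rows m B R"
proof -
  have "row_sum m B {} = (\<lambda>_. False)" by (simp add: row_sum_def)
  then show ?thesis unfolding code_of_rows_eq by (metis Pow_bottom image_eqI)
qed

lemma bkron_T2_blocks:
  assumes "i < M" "j < M"
  shows "bkron T2 M M B i j = B i j" and "\<not> bkron T2 M M B i (j + M)"
    and "bkron T2 M M B (i + M) j = B i j" and "bkron T2 M M B (i + M) (j + M) = B i j"
  using assms by (simp_all add: bkron_def T2_def div_add_self2 gr_implies_not0)

lemma row_sum_bkron_T2:
  assumes "S \<subseteq> {..<2 * M}"
  shows "row_sum (2 * M) (bkron T2 M M B) S
    = plotkin_word M (row_sum M B {i\<in>S. i < M}) (row_sum M B {i. i + M \<in> S})"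
proof
  fix j
  let ?K = "bkron T2 M M B"
  have "finite S" using assms finite_subset by blast
  note col = card_filter_split_at[OF this, where M = M]
  have high_lt: "i < M" if "i + M \<in> S" for i
    using assms that by auto
  show "row_sum (2 * M) ?K S j = plotkin_word M (row_sum M B {i\<in>S. i < M}) (row_sum M B {i. i + M \<in> S}) j"
  proof (cases "j < M")
    case True
    have "{i\<in>S. i < M \<and> ?K i j} = {i\<in>{i\<in>S. i < M}. B i j}"
      and "{i. i + M \<in> S \<and> ?K (i + M) j} = {i\<in>{i. i + M \<in> S}. B i j}"
      using True high_lt by (auto simp: bkron_T2_blocks)
    then have "card {i\<in>S. ?K i j} = card {i\<in>{i\<in>S. i < M}. B i j} + card {i\<in>{i. i + M \<in> S}. B i j}"
      using col[of "\<lambda>i. ?K i j"] by simp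
    then show ?thesis
      using True by (simp add: row_sum_def plotkin_word_def)
  next
    case False
    show ?thesis
    proof (cases "j < 2 * M")
      case True
      define j' where "j' = j - M"
      have j: "j = j' + M" "j' < M" using False True by (simp_all add: j'_def)
      have "{i\<in>S. i < M \<and> ?K i j} = {}"
        and "{i. i + M \<in> S \<and> ?K (i + M) j} = {i\<in>{i. i + M \<in> S}. B i j'}"
        using j high_lt by (auto simp: bkron_T2_blocks)
      then have "card {i\<in>S. ?K i j} = card {i\<in>{i. i + M \<in> S}. B i j'}"
        using col[of "\<lambda>i. ?K i j"] by simp
      then show ?thesis
        using j by (simp add: row_sum_def plotkin_word_def)
    qed (simp add: row_sum_def plotkin_word_def)
  qed
qed

lemma split_at_reassemble:
  fixes M :: nat
  assumes "R0 \<subseteq> {..<M}"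
  shows "{i \<in> R0 \<union> (\<lambda>i. i + M) ` R1. i < M} = R0"
    and "{i. i + M \<in> R0 \<union> (\<lambda>i. i + M) ` R1} = R1"
  using assms by auto

lemma code_of_rows_bkron_T2:
  assumes "R \<subseteq> {..<2 * M}"
  shows "code_of_rows (2 * M) (bkron T2 M M B) R
    = {plotkin_word M u v | u v. u \<in> code_of_rows M B {i\<in>R. i < M} \<and> v \<in> code_of_rows M B {i. i + M \<in> R}}"
proof (intro equalityI subsetI)
  fix c assume "c \<in> code_of_rows (2 * M) (bkron T2 M M B) R"
  then obtain S where S: "S \<subseteq> R" "c = row_sum (2 * M) (bkron T2 M M B) S"
    by (auto simp: code_of_rows_eq)
  then have "c = plotkin_word M (row_sum M B {i\<in>S. i < M}) (row_sum M B {i. i + M \<in> S})"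
    using assms row_sum_bkron_T2 by blast
  moreover have "{i\<in>S. i < M} \<subseteq> {i\<in>R. i < M}" "{i. i + M \<in> S} \<subseteq> {i. i + M \<in> R}"
    using S by auto
  ultimately show "c \<in> {plotkin_word M u v | u v.
      u \<in> code_of_rows M B {i\<in>R. i < M} \<and> v \<in> code_of_rows M B {i. i + M \<in> R}}"
    by (auto simp: code_of_rows_eq)
next
  fix c assume "c \<in> {plotkin_word M u v | u v.
      u \<in> code_of_rows M B {i\<in>R. i < M} \<and> v \<in> code_of_rows M B {i. i + M \<in> R}}"
  then obtain S0 S1 where S: "S0 \<subseteq> {i\<in>R. i < M}" "S1 \<subseteq> {i. i + M \<in> R}"
    and c: "c = plotkin_word M (row_sum M B S0) (row_sum M B S1)"
    by (auto simp: code_of_rows_eq)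
  define S where "S = S0 \<union> (\<lambda>i. i + M) ` S1"
  have "S \<subseteq> R" using S by (auto simp: S_def)
  moreover have "{i\<in>S. i < M} = S0" "{i. i + M \<in> S} = S1"
    unfolding S_def using S(1) by (auto simp: split_at_reassemble)
  ultimately have "c = row_sum (2 * M) (bkron T2 M M B) S"
    using c assms row_sum_bkron_T2[of S] by auto
  with \<open>S \<subseteq> R\<close> show "c \<in> code_of_rows (2 * M) (bkron T2 M M B) R"
    by (auto simp: code_of_rows_eq)
qed

section \<open>Distance thresholds\<close>

definition dist_ge :: "nat \<Rightarrow> bmat \<Rightarrow> nat \<Rightarrow> nat \<Rightarrow> nat set \<Rightarrow> bool" where
  "dist_ge m B e d R \<longleftrightarrow> (\<forall>c\<in>code_of_rows m B R. (\<exists>j<m. c j) \<longrightarrow> d \<le> e * weight m c)"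

lemma dist_ge_antimono: "R' \<subseteq> R \<Longrightarrow> dist_ge m B e d R \<Longrightarrow> dist_ge m B e d R'"
  unfolding dist_ge_def code_of_rows_eq by blast

lemma dist_ge_bkron_T2_iff:
  assumes "R \<subseteq> {..<2 * M}"
  shows "dist_ge (2 * M) (bkron T2 M M B) e d R
    \<longleftrightarrow> dist_ge M B e d {i\<in>R. i < M} \<and> dist_ge M B (2 * e) d {i. i + M \<in> R}"
proof -
  let ?U = "code_of_rows M B {i\<in>R. i < M}" and ?V = "code_of_rows M B {i. i + M \<in> R}"
  have "dist_ge (2 * M) (bkron T2 M M B) e d R \<longleftrightarrow> (\<forall>u\<in>?U. \<forall>v\<in>?V.
      (\<exists>j<2 * M. plotkin_word M u v j) \<longrightarrow> d \<le> e * weight (2 * M) (plotkin_word M u v))"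
    unfolding dist_ge_def code_of_rows_bkron_T2[OF assms] by blast
  also have "\<dots> \<longleftrightarrow> (\<forall>u\<in>?U. \<forall>v\<in>?V.
      (\<exists>j<M. u j \<or> v j) \<longrightarrow> d \<le> e * (weight M (\<lambda>j. u j \<noteq> v j) + weight M v))"
    by (simp only: plotkin_word_nonzero_iff weight_plotkin_word)
  also have "\<dots> \<longleftrightarrow> dist_ge M B e d {i\<in>R. i < M} \<and> dist_ge M B (2 * e) d {i. i + M \<in> R}"
    unfolding dist_ge_def by (rule plotkin_bound_iff) (rule zero_in_code_of_rows)+
  finally show ?thesis .
qed

definition nonzero_rows :: "nat \<Rightarrow> bmat \<Rightarrow> bool" where
  "nonzero_rows m B \<longleftrightarrow> (\<forall>i<m. \<exists>j<m. B i j)"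

lemma dist_ge_iff_min_dist:
  assumes "nonzero_rows m B" and "R \<subseteq> {..<m}" and "R \<noteq> {}"
  shows "dist_ge m B e d R \<longleftrightarrow> d \<le> e * min_dist m B R"
proof -
  let ?W = "{weight m c | c. c \<in> code_of_rows m B R \<and> (\<exists>j<m. c j)}"
  have fin: "finite ?W"
    by (rule finite_subset[of _ "{..m}"]) (auto simp: weight_le)
  obtain i where "i \<in> R" using assms(3) by blast
  then obtain j where "j < m" "B i j" using assms(1,2) unfolding nonzero_rows_def by blast
  have "row_sum m B {i} \<in> code_of_rows m B R" using \<open>i \<in> R\<close> by (auto simp: code_of_rows_eq)
  moreover have "{i'\<in>{i}. B i' j} = {i}" using \<open>B i j\<close> by auto
  then have "row_sum m B {i} j" using \<open>j < m\<close> by (simp add: row_sum_def)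
  ultimately have "weight m (row_sum m B {i}) \<in> ?W" using \<open>j < m\<close> by blast
  then have ne: "?W \<noteq> {}" by blast
  have "mono ((*) e :: nat \<Rightarrow> nat)" by (rule monoI) simp
  then have "e * min_dist m B R = Min ((*) e ` ?W)"
    unfolding min_dist_def using fin ne by (rule mono_Min_commute)
  also have "d \<le> \<dots> \<longleftrightarrow> (\<forall>w\<in>?W. d \<le> e * w)"
    using fin ne by simp
  also have "\<dots> \<longleftrightarrow> dist_ge m B e d R"
    unfolding dist_ge_def by blast
  finally show ?thesis ..
qed

definition spec_ge :: "nat \<Rightarrow> bmat \<Rightarrow> nat \<Rightarrow> nat \<Rightarrow> nat \<Rightarrow> bool" where
  "spec_ge m B e d k \<longleftrightarrow> (\<exists>R\<subseteq>{..<m}. card R = k \<and> dist_ge m B e d R)"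

lemma spec_ge_iff_md_spec:
  assumes "nonzero_rows m B" and "1 \<le> k" and "k \<le> m"
  shows "spec_ge m B e d k \<longleftrightarrow> d \<le> e * md_spec m B k"
proof -
  let ?X = "{min_dist m B R | R. R \<subseteq> {..<m} \<and> card R = k}"
  have fin: "finite ?X"
    by (rule finite_subset[of _ "min_dist m B ` Pow {..<m}"]) auto
  have "min_dist m B {..<k} \<in> ?X" using assms(3) by auto
  then have ne: "?X \<noteq> {}" by blast
  have "mono ((*) e :: nat \<Rightarrow> nat)" by (rule monoI) simp
  then have "e * md_spec m B k = Max ((*) e ` ?X)"
    unfolding md_spec_def using fin ne by (rule mono_Max_commute)
  also have "d \<le> \<dots> \<longleftrightarrow> (\<exists>x\<in>?X. d \<le> e * x)"
    using fin ne by (simp add: Max_ge_iff)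
  also have "\<dots> \<longleftrightarrow> (\<exists>R\<subseteq>{..<m}. card R = k \<and> d \<le> e * min_dist m B R)"
    by blast
  also have "\<dots> \<longleftrightarrow> spec_ge m B e d k"
  proof -
    have "R \<noteq> {}" if "card R = k" for R :: "nat set" using that assms(2) by auto
    then show ?thesis unfolding spec_ge_def using dist_ge_iff_min_dist[OF assms(1)] by blast
  qed
  finally show ?thesis ..
qed

lemma spec_ge_0: "spec_ge m B e d 0"
proof -
  have "dist_ge m B e d {}"
    unfolding dist_ge_def code_of_rows_eq by (simp add: row_sum_def)
  then show ?thesis
    unfolding spec_ge_def by (intro exI[of _ "{}"]) simp
qed

lemma spec_ge_le: "spec_ge m B e d k \<Longrightarrow> k \<le> m"
  unfolding spec_ge_def using card_mono[OF finite_lessThan] by fastforce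

lemma spec_ge_downward:
  assumes "spec_ge m B e d k" and "k' \<le> k"
  shows "spec_ge m B e d k'"
proof -
  obtain R where R: "R \<subseteq> {..<m}" "card R = k" "dist_ge m B e d R"
    using assms(1) unfolding spec_ge_def by blast
  obtain R' where "R' \<subseteq> R" "card R' = k'"
    using obtain_subset_with_card_n[of k' R] R(2) assms(2) by blast
  then show ?thesis
    unfolding spec_ge_def using R dist_ge_antimono[of R' R] by blast
qed

lemma spec_ge_bkron_T2_iff:
  "spec_ge (2 * M) (bkron T2 M M B) e d k
    \<longleftrightarrow> (\<exists>k0 k1. k = k0 + k1 \<and> spec_ge M B e d k0 \<and> spec_ge M B (2 * e) d k1)"
proof
  assume "spec_ge (2 * M) (bkron T2 M M B) e d k"
  then obtain R where R: "R \<subseteq> {..<2 * M}" "card R = k" "dist_ge (2 * M) (bkron T2 M M B) e d R"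
    unfolding spec_ge_def by blast
  let ?R0 = "{i\<in>R. i < M}" and ?R1 = "{i. i + M \<in> R}"
  have "?R0 \<subseteq> {..<M}" "?R1 \<subseteq> {..<M}" using R(1) by auto
  moreover have "dist_ge M B e d ?R0" "dist_ge M B (2 * e) d ?R1"
    using R(3) dist_ge_bkron_T2_iff[OF R(1)] by blast+
  moreover have "finite R" using R(1) by (rule finite_subset) simp
  then have "k = card ?R0 + card ?R1" using R(2) card_split_at by blast
  ultimately show "\<exists>k0 k1. k = k0 + k1 \<and> spec_ge M B e d k0 \<and> spec_ge M B (2 * e) d k1"
    unfolding spec_ge_def by blast
next
  assume "\<exists>k0 k1. k = k0 + k1 \<and> spec_ge M B e d k0 \<and> spec_ge M B (2 * e) d k1"
  then obtain R0 R1 where k: "k = card R0 + card R1"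
    and R0: "R0 \<subseteq> {..<M}" "dist_ge M B e d R0" and R1: "R1 \<subseteq> {..<M}" "dist_ge M B (2 * e) d R1"
    unfolding spec_ge_def by blast
  define R where "R = R0 \<union> (\<lambda>i. i + M) ` R1"
  have "R \<subseteq> {..<2 * M}" using R0 R1 by (auto simp: R_def)
  have parts: "{i\<in>R. i < M} = R0" "{i. i + M \<in> R} = R1"
    unfolding R_def using R0(1) by (rule split_at_reassemble)+
  have "finite R" using \<open>R \<subseteq> {..<2 * M}\<close> by (rule finite_subset) simp
  then have "card R = k" using k card_split_at[of R M] parts by simp
  moreover have "dist_ge (2 * M) (bkron T2 M M B) e d R"
    using dist_ge_bkron_T2_iff[OF \<open>R \<subseteq> {..<2 * M}\<close>] parts R0(2) R1(2) by simp
  ultimately show "spec_ge (2 * M) (bkron T2 M M B) e d k"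
    unfolding spec_ge_def using \<open>R \<subseteq> {..<2 * M}\<close> by blast
qed

lemma downward_closed_iff_le_card:
  fixes P :: "nat \<Rightarrow> bool"
  assumes "P 0" and down: "\<And>a b. P a \<Longrightarrow> b \<le> a \<Longrightarrow> P b" and bound: "\<And>a. P a \<Longrightarrow> a \<le> n"
  shows "P a \<longleftrightarrow> a \<le> card {i. i < n \<and> P (Suc i)}"
proof
  assume "P a"
  have "{..<a} \<subseteq> {i. i < n \<and> P (Suc i)}"
  proof
    fix i assume "i \<in> {..<a}"
    then have "P (Suc i)" using down[OF \<open>P a\<close>] by simp
    moreover from this have "i < n" using bound[of "Suc i"] by simp
    ultimately show "i \<in> {i. i < n \<and> P (Suc i)}" by simp
  qed
  then have "card {..<a} \<le> card {i. i < n \<and> P (Suc i)}" by (rule card_mono[rotated]) simp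
  then show "a \<le> card {i. i < n \<and> P (Suc i)}" by simp
next
  assume a: "a \<le> card {i. i < n \<and> P (Suc i)}"
  show "P a"
  proof (rule ccontr)
    assume "\<not> P a"
    have "{i. i < n \<and> P (Suc i)} \<subseteq> {..<a - 1}"
    proof
      fix i assume "i \<in> {i. i < n \<and> P (Suc i)}"
      then have "\<not> a \<le> Suc i" using down \<open>\<not> P a\<close> by blast
      then show "i \<in> {..<a - 1}" by simp
    qed
    then have "card {i. i < n \<and> P (Suc i)} \<le> card {..<a - 1}" by (rule card_mono[rotated]) simp
    moreover have "a \<noteq> 0" using \<open>P 0\<close> \<open>\<not> P a\<close> by metis
    ultimately show False using a by simp
  qed
qed

lemma md_spectrum_length: "length (md_spectrum m B) = m"
  by (simp add: md_spectrum_def)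

lemma md_spectrum_nth: "k < m \<Longrightarrow> md_spectrum m B ! k = md_spec m B (Suc k)"
  unfolding md_spectrum_def by (simp del: upt_Suc)

lemma spec_ge_Suc_iff_nth:
  assumes "nonzero_rows m B" and "k < m"
  shows "spec_ge m B e d (Suc k) \<longleftrightarrow> d \<le> e * md_spectrum m B ! k"
  using spec_ge_iff_md_spec[OF assms(1)] assms(2) by (simp add: md_spectrum_nth)

definition count_ge :: "nat \<Rightarrow> nat list \<Rightarrow> nat" where
  "count_ge d xs = length (filter (\<lambda>x. d \<le> x) xs)"

lemma spec_ge_iff_le_count_ge:
  assumes "nonzero_rows m B"
  shows "spec_ge m B e d k \<longleftrightarrow> k \<le> count_ge d (map ((*) e) (md_spectrum m B))"
proof -
  have "spec_ge m B e d k \<longleftrightarrow> k \<le> card {i. i < m \<and> spec_ge m B e d (Suc i)}"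
    by (rule downward_closed_iff_le_card) (auto intro: spec_ge_0 spec_ge_downward spec_ge_le)
  also have "{i. i < m \<and> spec_ge m B e d (Suc i)}
      = {i. i < length (md_spectrum m B) \<and> d \<le> map ((*) e) (md_spectrum m B) ! i}"
    using spec_ge_Suc_iff_nth[OF assms] by (auto simp: md_spectrum_length)
  finally show ?thesis
    by (simp add: count_ge_def length_filter_conv_card)
qed

section \<open>Sorted lists and Kronecker products of lists\<close>

lemma count_ge_mset_cong: "mset xs = mset ys \<Longrightarrow> count_ge d xs = count_ge d ys"
  unfolding count_ge_def by (metis mset_filter size_mset)

lemma sorted_desc_nth_ge_iff:
  fixes ys :: "nat list"
  assumes "sorted_wrt (\<ge>) ys" and "k < length ys"
  shows "d \<le> ys ! k \<longleftrightarrow> k < card {j. j < length ys \<and> d \<le> ys ! j}"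
    (is "_ \<longleftrightarrow> k < card ?A")
proof -
  have desc: "ys ! j \<le> ys ! i" if "i \<le> j" "j < length ys" for i j
    using that sorted_wrt_nth_less[OF assms(1), of i j] by (cases "i = j") auto
  show ?thesis
  proof
    assume "d \<le> ys ! k"
    then have "{..k} \<subseteq> ?A" using assms(2) desc by (auto intro: order.trans)
    then have "card {..k} \<le> card ?A" by (rule card_mono[rotated]) simp
    then show "k < card ?A" by simp
  next
    assume "k < card ?A"
    show "d \<le> ys ! k"
    proof (rule ccontr)
      assume "\<not> d \<le> ys ! k"
      then have "?A \<subseteq> {..<k}" using desc by (auto simp: not_less intro: le_trans)
      then have "card ?A \<le> card {..<k}" by (rule card_mono[rotated]) simp
      then show False using \<open>k < card ?A\<close> by simp
    qed
  qed
qed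

lemma nth_sort_desc_ge_iff:
  assumes "k < length xs"
  shows "d \<le> sort_desc xs ! k \<longleftrightarrow> k < count_ge d xs"
proof -
  have "count_ge d xs = count_ge d (sort_desc xs)"
    by (rule count_ge_mset_cong) (simp add: sort_desc_def)
  also have "\<dots> = card {j. j < length (sort_desc xs) \<and> d \<le> sort_desc xs ! j}"
    by (simp add: count_ge_def length_filter_conv_card)
  finally show ?thesis
    using assms by (simp add: sorted_desc_nth_ge_iff sort_desc_def sorted_wrt_rev)
qed

lemma nth_ge_equalityI:
  fixes xs ys :: "nat list"
  assumes "length xs = length ys" and "\<And>k d. k < length xs \<Longrightarrow> d \<le> xs ! k \<longleftrightarrow> d \<le> ys ! k"
  shows "xs = ys"
proof (rule nth_equalityI)
  fix k assume "k < length xs"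
  then show "xs ! k = ys ! k"
    using assms(2)[of k "xs ! k"] assms(2)[of k "ys ! k"] by (simp add: order_antisym)
qed (rule assms(1))

lemma le_add_iff_split: "(k :: nat) \<le> a + b \<longleftrightarrow> (\<exists>k0 k1. k = k0 + k1 \<and> k0 \<le> a \<and> k1 \<le> b)"
proof
  assume "k \<le> a + b"
  then show "\<exists>k0 k1. k = k0 + k1 \<and> k0 \<le> a \<and> k1 \<le> b"
    by (intro exI[of _ "min k a"] exI[of _ "k - min k a"]) auto
qed auto

lemma mset_sort_desc: "mset (sort_desc xs) = mset xs"
  by (simp add: sort_desc_def)

lemma sort_desc_mset_cong: "mset xs = mset ys \<Longrightarrow> sort_desc xs = sort_desc ys"
  unfolding sort_desc_def using properties_for_sort[of "sort ys" xs] by simp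

lemma lkron_Nil: "lkron [] v = []"
  by (simp add: lkron_def)

lemma lkron_Cons: "lkron (x # u) v = map ((*) x) v @ lkron u v"
  by (simp add: lkron_def)

lemma lkron_append: "lkron (u @ u') v = lkron u v @ lkron u' v"
  by (simp add: lkron_def)

lemma length_lkron: "length (lkron u v) = length u * length v"
  by (induct u) (simp_all add: lkron_Cons lkron_Nil)

lemma map_times_one: "map ((*) (1 :: nat)) v = v"
  by (induct v) simp_all

lemma lkron_map_times: "lkron (map ((*) x) u) v = map ((*) x) (lkron u v)"
  by (induct u) (simp_all add: lkron_Cons lkron_Nil mult.assoc)

lemma lkron_assoc: "lkron (lkron u v) w = lkron u (lkron v w)"
  by (induct u) (simp_all add: lkron_Cons lkron_Nil lkron_append lkron_map_times)

lemma lkron_one_left: "lkron [1] v = v"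
  unfolding lkron_Cons lkron_Nil map_times_one by simp

lemma lkron_one_right: "lkron u [1] = u"
  by (induct u) (simp_all add: lkron_Cons lkron_Nil)

lemma lkron_2_1: "lkron [2, 1] v = map ((*) 2) v @ v"
  unfolding lkron_Cons lkron_Nil map_times_one by simp

lemma count_ge_lkron_2_1:
  "count_ge d (lkron [2, 1] v) = count_ge d (map ((*) 1) v) + count_ge d (map ((*) 2) v)"
  unfolding lkron_2_1 map_times_one count_ge_def by simp

lemma mset_lkron: "mset (lkron u v) = (\<Sum>x\<in>#mset u. image_mset ((*) x) (mset v))"
  by (induct u) (simp_all add: lkron_Cons lkron_Nil)

section \<open>Spectra of Kronecker products\<close>

lemma nonzero_rows_bkron:
  assumes "nonzero_rows a A" and "nonzero_rows m B"
  shows "nonzero_rows (a * m) (bkron A m m B)"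
  unfolding nonzero_rows_def
proof (intro allI impI)
  fix i assume "i < a * m"
  then have "0 < m" by (metis mult_0_right neq0_conv not_less0)
  then have "i div m < a" "i mod m < m"
    using \<open>i < a * m\<close> by (simp_all add: less_mult_imp_div_less)
  then obtain ja jb where ja: "ja < a" "A (i div m) ja" and jb: "jb < m" "B (i mod m) jb"
    using assms unfolding nonzero_rows_def by blast
  have "ja * m + jb < (ja + 1) * m" using jb(1) by simp
  also have "\<dots> \<le> a * m" using ja(1) by (intro mult_right_mono) simp_all
  finally have "ja * m + jb < a * m" .
  moreover have "bkron A m m B i (ja * m + jb)"
    using ja jb by (simp add: bkron_def)
  ultimately show "\<exists>j<a * m. bkron A m m B i j" by blast
qed

lemma nonzero_rows_T2: "nonzero_rows 2 T2"
  by (auto simp: nonzero_rows_def T2_def)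

lemma sort_desc_md_spectrum:
  assumes "nonzero_rows m B"
  shows "sort_desc (md_spectrum m B) = md_spectrum m B"
proof (rule nth_ge_equalityI)
  show "length (sort_desc (md_spectrum m B)) = length (md_spectrum m B)"
    by (simp add: sort_desc_def)
  fix k d assume "k < length (sort_desc (md_spectrum m B))"
  then have k: "k < m" by (simp add: sort_desc_def md_spectrum_length)
  have "d \<le> sort_desc (md_spectrum m B) ! k \<longleftrightarrow> Suc k \<le> count_ge d (map ((*) 1) (md_spectrum m B))"
    unfolding map_times_one using k by (simp add: nth_sort_desc_ge_iff md_spectrum_length Suc_le_eq)
  also have "\<dots> \<longleftrightarrow> d \<le> md_spectrum m B ! k"
    using spec_ge_iff_le_count_ge[OF assms] spec_ge_Suc_iff_nth[OF assms k] by simp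
  finally show "d \<le> sort_desc (md_spectrum m B) ! k \<longleftrightarrow> d \<le> md_spectrum m B ! k" .
qed

theorem md_spectrum_bkron_T2:
  assumes "nonzero_rows M B"
  shows "md_spectrum (2 * M) (bkron T2 M M B) = sort_desc (lkron [2, 1] (md_spectrum M B))"
proof (rule nth_ge_equalityI)
  let ?K = "bkron T2 M M B" and ?S = "md_spectrum M B"
  show "length (md_spectrum (2 * M) ?K) = length (sort_desc (lkron [2, 1] ?S))"
    by (simp add: sort_desc_def length_lkron md_spectrum_length)
  fix k d assume "k < length (md_spectrum (2 * M) ?K)"
  then have k: "k < 2 * M" by (simp add: md_spectrum_length)
  have "nonzero_rows (2 * M) ?K" using nonzero_rows_bkron[OF nonzero_rows_T2 assms] .
  then have "d \<le> md_spectrum (2 * M) ?K ! k \<longleftrightarrow> spec_ge (2 * M) ?K 1 d (Suc k)"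
    using spec_ge_Suc_iff_nth k by simp
  also have "\<dots> \<longleftrightarrow> (\<exists>k0 k1. Suc k = k0 + k1 \<and> spec_ge M B 1 d k0 \<and> spec_ge M B 2 d k1)"
    using spec_ge_bkron_T2_iff[of M B 1] by simp
  also have "\<dots> \<longleftrightarrow> Suc k \<le> count_ge d (map ((*) 1) ?S) + count_ge d (map ((*) 2) ?S)"
    unfolding le_add_iff_split spec_ge_iff_le_count_ge[OF assms] ..
  also have "\<dots> \<longleftrightarrow> d \<le> sort_desc (lkron [2, 1] ?S) ! k"
  proof -
    have "k < length (lkron [2, 1] ?S)" using k by (simp add: length_lkron md_spectrum_length)
    then show ?thesis unfolding count_ge_lkron_2_1[symmetric] Suc_le_eq by (rule nth_sort_desc_ge_iff[symmetric])
  qed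
  finally show "d \<le> md_spectrum (2 * M) ?K ! k \<longleftrightarrow> d \<le> sort_desc (lkron [2, 1] ?S) ! k" .
qed

lemma mixed_radix_digits:
  fixes x r r' :: nat
  shows "x div (r' * r) = x div r div r'"
    and "x mod (r' * r) div r = x div r mod r'"
    and "x mod (r' * r) mod r = x mod r"
proof -
  show "x div (r' * r) = x div r div r'" by (metis div_mult2_eq mult.commute)
  show "x mod (r' * r) div r = x div r mod r'"
    by (cases "r = 0") (simp_all add: mod_mult2_eq mult.commute[of r'])
  show "x mod (r' * r) mod r = x mod r" by (simp add: mod_mod_cancel)
qed

lemma bkron_assoc: "bkron (bkron A r' c' B) r c C = bkron A (r' * r) (c' * c) (bkron B r c C)"
  by (intro ext) (simp add: bkron_def mixed_radix_digits)

lemma bkpow2_T2_first_column: "bkpow2 T2 n i 0"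
  by (induct n arbitrary: i) (simp_all add: bkron_def T2_def)

lemma nonzero_rows_bkpow2_T2: "nonzero_rows (2 ^ n) (bkpow2 T2 n)"
  unfolding nonzero_rows_def by (intro allI impI exI[of _ 0] conjI) (simp_all add: bkpow2_T2_first_column)

lemma md_spectrum_cong:
  assumes "\<And>i j. i < m \<Longrightarrow> j < m \<Longrightarrow> A i j = A' i j"
  shows "md_spectrum m A = md_spectrum m A'"
proof -
  have row_sum: "row_sum m A S = row_sum m A' S" if "S \<subseteq> {..<m}" for S
  proof
    fix j show "row_sum m A S j = row_sum m A' S j"
    proof (cases "j < m")
      case True
      then have "{i\<in>S. A i j} = {i\<in>S. A' i j}" using that assms by auto
      then show ?thesis by (simp add: row_sum_def)
    qed (simp add: row_sum_def)
  qed
  have "min_dist m A R = min_dist m A' R" if "R \<subseteq> {..<m}" for R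
  proof -
    have "code_of_rows m A R = code_of_rows m A' R"
      unfolding code_of_rows_eq using that by (intro image_cong refl row_sum) auto
    then show ?thesis by (simp add: min_dist_def)
  qed
  then have "md_spec m A k = md_spec m A' k" for k
    unfolding md_spec_def by (metis (no_types, lifting))
  then show ?thesis by (simp add: md_spectrum_def)
qed

theorem md_spectrum_bkron_bkpow2_T2:
  assumes "nonzero_rows m A"
  shows "md_spectrum (2 ^ n * m) (bkron (bkpow2 T2 n) m m A)
    = sort_desc (lkron (lkpow [2, 1] n) (md_spectrum m A))"
proof (induction n)
  case 0
  have "md_spectrum m (bkron (bkpow2 T2 0) m m A) = md_spectrum m A"
    by (rule md_spectrum_cong) (simp add: bkron_def)
  also have "\<dots> = sort_desc (lkron (lkpow [2, 1] 0) (md_spectrum m A))"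
    unfolding lkpow.simps lkron_one_left sort_desc_md_spectrum[OF assms] ..
  finally show ?case by simp
next
  case (Suc n)
  let ?K = "bkron (bkpow2 T2 n) m m A" and ?S = "md_spectrum m A"
  have "nonzero_rows (2 ^ n * m) ?K"
    by (rule nonzero_rows_bkron[OF nonzero_rows_bkpow2_T2 assms])
  then have "md_spectrum (2 * (2 ^ n * m)) (bkron T2 (2 ^ n * m) (2 ^ n * m) ?K)
      = sort_desc (lkron [2, 1] (md_spectrum (2 ^ n * m) ?K))"
    by (rule md_spectrum_bkron_T2)
  also have "\<dots> = sort_desc (lkron [2, 1] (sort_desc (lkron (lkpow [2, 1] n) ?S)))"
    unfolding Suc.IH ..
  also have "\<dots> = sort_desc (lkron (lkpow [2, 1] (Suc n)) ?S)"
    unfolding lkpow.simps lkron_assoc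
    by (rule sort_desc_mset_cong) (simp only: mset_lkron mset_sort_desc)
  finally show ?case by (simp add: bkron_assoc mult.assoc)
qed

lemma md_spectrum_one: "md_spectrum 1 (\<lambda>_ _. True) = [1]"
proof -
  have "code_of_rows 1 (\<lambda>_ _. True) {0} = {\<lambda>_. False, \<lambda>j. j < 1}"
    by (auto simp: code_of_rows_eq row_sum_def Pow_insert)
  then have "{weight 1 c | c. c \<in> code_of_rows 1 (\<lambda>_ _. True) {0} \<and> (\<exists>j<1. c j)}
      = {weight 1 (\<lambda>j. j < 1)}"
    by auto
  then have "min_dist 1 (\<lambda>_ _. True) {0} = 1"
    unfolding min_dist_def by (simp add: weight_def)
  moreover have "{min_dist 1 (\<lambda>_ _. True) R | R. R \<subseteq> {..<1} \<and> card R = 1}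
      = {min_dist 1 (\<lambda>_ _. True) {0}}"
    by (auto simp: card_1_singleton_iff)
  ultimately have "md_spec 1 (\<lambda>_ _. True) 1 = 1"
    unfolding md_spec_def by simp
  then show ?thesis by (simp add: md_spectrum_def)
qed

lemma md_spectrum_bkpow2_T2: "md_spectrum (2 ^ n) (bkpow2 T2 n) = sort_desc (lkpow [2, 1] n)"
proof -
  have "bkron (bkpow2 T2 n) 1 1 (\<lambda>_ _. True) = bkpow2 T2 n"
    by (simp add: bkron_def)
  moreover have "nonzero_rows 1 (\<lambda>_ _. True)" by (simp add: nonzero_rows_def)
  then have "md_spectrum (2 ^ n * 1) (bkron (bkpow2 T2 n) 1 1 (\<lambda>_ _. True))
      = sort_desc (lkron (lkpow [2, 1] n) (md_spectrum 1 (\<lambda>_ _. True)))"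
    by (rule md_spectrum_bkron_bkpow2_T2)
  ultimately show ?thesis
    unfolding md_spectrum_one lkron_one_right mult_1_right by simp
qed

lemma binvertible_nonzero_rows:
  assumes "binvertible p T"
  shows "nonzero_rows p T"
  unfolding nonzero_rows_def
proof (intro allI impI)
  fix i assume "i < p"
  obtain B where "\<forall>i<p. \<forall>j<p. bmult p T B i j = (i = j) \<and> bmult p B T i j = (i = j)"
    using assms unfolding binvertible_def by blast
  then have "odd (card {l. l < p \<and> T i l \<and> B l i})"
    using \<open>i < p\<close> unfolding bmult_def by blast
  then have "{l. l < p \<and> T i l \<and> B l i} \<noteq> {}" by (metis card.empty odd_pos less_irrefl)
  then show "\<exists>j<p. T i j" by blast
qed

text \<open>Of the kernel axioms only invertibility is used, and only to make every row
nonzero, so that no \<open>min_dist\<close> is the junk value \<open>Min {}\<close>.\<close>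

theorem proposition1:
  fixes n p :: nat and Tp :: bmat
  assumes "p \<ge> 1"
    and "binary_kernel p Tp"
  shows "md_spectrum (2^n * p) (bkron (bkpow2 T2 n) p p Tp)
           = sort_desc (lkron (md_spectrum (2^n) (bkpow2 T2 n)) (md_spectrum p Tp))
       \<and> md_spectrum (2^n * p) (bkron (bkpow2 T2 n) p p Tp)
           = sort_desc (lkron (lkpow [2, 1] n) (md_spectrum p Tp))"
proof -
  have spectrum: "md_spectrum (2^n * p) (bkron (bkpow2 T2 n) p p Tp)
      = sort_desc (lkron (lkpow [2, 1] n) (md_spectrum p Tp))"
    using assms(2) unfolding binary_kernel_def
    by (blast intro: md_spectrum_bkron_bkpow2_T2 binvertible_nonzero_rows)
  have "sort_desc (lkron (md_spectrum (2^n) (bkpow2 T2 n)) (md_spectrum p Tp))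
      = sort_desc (lkron (lkpow [2, 1] n) (md_spectrum p Tp))"
    unfolding md_spectrum_bkpow2_T2
    by (rule sort_desc_mset_cong) (simp only: mset_lkron mset_sort_desc)
  with spectrum show ?thesis by simp
qed

end
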